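(* For all $\bar s\in\mathbb{R}^{mn}$, $$\bar s^T\bar f(\bar s)\ \ge\ 2\,\bar f(\bar s)^T\bar f(\bar s)\ \ge\ 0 .$$
   Context: Let $n\ge1$, $m\ge2$. For $s\in\mathbb{R}^{mn}$ write $s=(s_{11},\dots,s_{1m},\dots,s_{n1},\dots,s_{nm})^T$. Define $f:\mathbb{R}^{mn}\to\mathbb{R}^{mn}$ by $f_{ij}(s)=e^{s_{ij}}/\sum_{l=1}^m e^{s_{il}}$ and $\bar f(s)=f(s)-\frac1m\mathbf 1_{mn}$, where $\mathbf 1_{mn}$ is the all-ones vector. *)

theory Defs
  imports Complex_Main
begin

text \<open>A vector s in R^(mn) is represented by its entries s i j (row i < n, column j < m,
  0-based indices). Entries outside the ranges are irrelevant.\<close>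

definition softmax :: "nat \<Rightarrow> (nat \<Rightarrow> nat \<Rightarrow> real) \<Rightarrow> nat \<Rightarrow> nat \<Rightarrow> real" where
  "softmax m s i j = exp (s i j) / (\<Sum>l<m. exp (s i l))"

definition fbar :: "nat \<Rightarrow> (nat \<Rightarrow> nat \<Rightarrow> real) \<Rightarrow> nat \<Rightarrow> nat \<Rightarrow> real" where
  "fbar m s i j = softmax m s i j - 1 / real m"

end

theory Submission
  imports Defs
begin

text \<open>Fix a row and write p for the softmax of its entries x. The identity
  2 m (\<Sum>j. x_j (p_j - 1/m)) = \<Sum>j,k. (x_j - x_k) (p_j - p_k),
  together with its instance x = p, reduces the claim to the pairwise inequality
  2 (p_j - p_k)^2 \<le> (x_j - x_k) (p_j - p_k).
  Here p_j - p_k = (exp a - exp b) / S with S \<ge> exp a + exp b, and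
  (exp a - exp b) / (exp a + exp b) = tanh ((a - b) / 2), so the pairwise inequality
  comes down to tanh t lying between 0 and t.\<close>

lemma tanh_real_le_self:
  fixes x :: real
  assumes "0 \<le> x"
  shows "tanh x \<le> x"
proof -
  have deriv: "((\<lambda>y. y - tanh y) has_real_derivative (tanh y)\<^sup>2) (at y)" for y :: real
  proof -
    have "cosh y \<noteq> 0"
      using cosh_real_pos[of y] by simp
    then have "((\<lambda>y. y - tanh y) has_real_derivative 1 - (1 - (tanh y)\<^sup>2) * 1) (at y)"
      by (intro DERIV_diff DERIV_ident has_field_derivative_tanh)
    then show ?thesis by simp
  qed
  have "0 - tanh 0 \<le> x - tanh x"
    by (rule DERIV_nonneg_imp_nondecreasing[OF assms]) (use deriv zero_le_power2 in blast)
  then show ?thesis by simp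
qed

lemma tanh_real_mult_diff_nonneg:
  fixes x :: real
  shows "0 \<le> tanh x * (x - tanh x)"
proof (cases "0 \<le> x")
  case True
  then show ?thesis using tanh_real_le_self[of x] by simp
next
  case False
  then have "x \<le> tanh x" using tanh_real_le_self[of "-x"] by simp
  with False show ?thesis by (intro mult_nonpos_nonpos) auto
qed

lemma exp_diff_div_exp_add:
  fixes a b :: real
  shows "(exp a - exp b) / (exp a + exp b) = tanh ((a - b) / 2)"
proof -
  define c t where "c = exp ((a + b) / 2)" and "t = (a - b) / 2"
  have ab: "exp a = c * exp t" "exp b = c * exp (- t)"
    unfolding c_def t_def by (simp_all flip: exp_add add: field_simps)
  have "c > 0" unfolding c_def by simp
  then have "(exp a - exp b) / (exp a + exp b) = (exp t - exp (- t)) / (exp t + exp (- t))"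
    unfolding ab by (simp flip: distrib_left right_diff_distrib)
  then show ?thesis
    by (simp only: tanh_altdef t_def)
qed

lemma exp_diff_sq_le:
  fixes a b :: real
  shows "2 * (exp a - exp b)\<^sup>2 \<le> (a - b) * (exp a - exp b) * (exp a + exp b)"
proof -
  define v T where "v = exp a + exp b" and "T = tanh ((a - b) / 2)"
  have "v > 0" unfolding v_def by (simp add: add_pos_pos)
  then have u: "exp a - exp b = T * v"
    using exp_diff_div_exp_add[of a b] unfolding v_def T_def by (simp add: field_simps)
  have "(a - b) * (exp a - exp b) * (exp a + exp b) - 2 * (exp a - exp b)\<^sup>2
        = 2 * v\<^sup>2 * (T * ((a - b) / 2 - T))"
    unfolding u v_def[symmetric] by (simp add: algebra_simps power2_eq_square)
  also have "\<dots> \<ge> 0"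
    using tanh_real_mult_diff_nonneg[of "(a - b) / 2"] unfolding T_def by simp
  finally show ?thesis by simp
qed

lemma sum_pairwise_diff_mult:
  fixes x y :: "'b \<Rightarrow> 'a :: comm_ring_1"
  shows "(\<Sum>j\<in>A. \<Sum>k\<in>A. (x j - x k) * (y j - y k))
       = 2 * (of_nat (card A) * (\<Sum>j\<in>A. x j * y j) - (\<Sum>j\<in>A. x j) * (\<Sum>j\<in>A. y j))"
proof -
  have "(\<Sum>j\<in>A. \<Sum>k\<in>A. (x j - x k) * (y j - y k))
      = (\<Sum>j\<in>A. \<Sum>k\<in>A. x j * y j) + (\<Sum>j\<in>A. \<Sum>k\<in>A. x k * y k)
        - (\<Sum>j\<in>A. \<Sum>k\<in>A. x j * y k) - (\<Sum>j\<in>A. \<Sum>k\<in>A. x k * y j)"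
    by (simp add: sum.distrib sum_subtractf left_diff_distrib right_diff_distrib)
  also have "(\<Sum>j\<in>A. \<Sum>k\<in>A. x k * y k) = (\<Sum>j\<in>A. \<Sum>k\<in>A. x j * y j)"
    by (rule sum.swap)
  also have "(\<Sum>j\<in>A. \<Sum>k\<in>A. x j * y j) = of_nat (card A) * (\<Sum>j\<in>A. x j * y j)"
    by (simp add: sum_distrib_left mult.commute)
  also have "(\<Sum>j\<in>A. \<Sum>k\<in>A. x k * y j) = (\<Sum>j\<in>A. \<Sum>k\<in>A. x j * y k)"
    by (rule sum.swap)
  also have "(\<Sum>j\<in>A. \<Sum>k\<in>A. x j * y k) = (\<Sum>j\<in>A. x j) * (\<Sum>j\<in>A. y j)"
    by (rule sum_product[symmetric])
  finally show ?thesis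
    by (simp add: algebra_simps)
qed

lemma exp_div_diff_sq_le:
  fixes a b S :: real
  assumes S: "exp a + exp b \<le> S"
  shows "2 * (exp a / S - exp b / S)\<^sup>2 \<le> (a - b) * (exp a / S - exp b / S)"
proof -
  have "0 < exp a + exp b" by (simp add: add_pos_pos)
  then have "S > 0" using S by linarith
  have "0 \<le> (a - b) * (exp a - exp b) * (exp a + exp b)"
    using exp_diff_sq_le[of a b] zero_le_power2[of "exp a - exp b"] by linarith
  then have "0 \<le> (a - b) * (exp a - exp b)"
    using \<open>0 < exp a + exp b\<close> by (simp add: zero_le_mult_iff)
  then have "2 * (exp a - exp b)\<^sup>2 \<le> (a - b) * (exp a - exp b) * S"
    using exp_diff_sq_le[of a b] mult_left_mono[OF S] by (meson order_trans)
  then have "2 * (exp a - exp b)\<^sup>2 / S\<^sup>2 \<le> (a - b) * (exp a - exp b) * S / S\<^sup>2"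
    by (simp add: divide_right_mono)
  moreover have "2 * (exp a - exp b)\<^sup>2 / S\<^sup>2 = 2 * (exp a / S - exp b / S)\<^sup>2"
    by (simp add: power_divide flip: diff_divide_distrib)
  moreover have "(a - b) * (exp a - exp b) * S / S\<^sup>2 = (a - b) * (exp a / S - exp b / S)"
    using \<open>S > 0\<close> by (simp add: power2_eq_square flip: diff_divide_distrib)
  ultimately show ?thesis
    by simp
qed

lemma sum_mult_centered_eq:
  fixes x p :: "nat \<Rightarrow> real"
  assumes "(\<Sum>j<m. p j) = 1"
  shows "2 * real m * (\<Sum>j<m. x j * (p j - 1 / real m))
       = (\<Sum>j<m. \<Sum>k<m. (x j - x k) * (p j - p k))"
proof -
  have "m > 0" using assms by (cases m) auto
  have "real m * (\<Sum>j<m. x j * (p j - 1 / real m)) = real m * (\<Sum>j<m. x j * p j) - (\<Sum>j<m. x j)"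
    using \<open>m > 0\<close> by (simp add: right_diff_distrib sum_subtractf sum_divide_distrib[symmetric])
  then show ?thesis
    using assms by (simp add: sum_pairwise_diff_mult)
qed

lemma sum_centered_sq_eq:
  fixes p :: "nat \<Rightarrow> real"
  assumes "(\<Sum>j<m. p j) = 1"
  shows "(\<Sum>j<m. (p j - 1 / real m)\<^sup>2) = (\<Sum>j<m. p j * (p j - 1 / real m))"
proof -
  have "m > 0" using assms by (cases m) auto
  have "(\<Sum>j<m. p j - 1 / real m) = 0"
    using assms \<open>m > 0\<close> by (simp add: sum_subtractf)
  then have "(\<Sum>j<m. (p j - 1 / real m)\<^sup>2)
      = (\<Sum>j<m. (p j - 1 / real m)\<^sup>2) + (\<Sum>j<m. p j - 1 / real m) / real m"
    by simp
  also have "\<dots> = (\<Sum>j<m. p j * (p j - 1 / real m))"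
    using \<open>m > 0\<close> by (simp add: sum_divide_distrib flip: sum.distrib)
      (intro sum.cong refl, simp add: power2_eq_square field_simps)
  finally show ?thesis .
qed

lemma centered_sum_ge_of_pairwise:
  fixes x p :: "nat \<Rightarrow> real"
  assumes sum_p: "(\<Sum>j<m. p j) = 1"
    and pairwise: "\<And>j k. j < m \<Longrightarrow> k < m \<Longrightarrow> 2 * (p j - p k)\<^sup>2 \<le> (x j - x k) * (p j - p k)"
  shows "2 * (\<Sum>j<m. (p j - 1 / real m)\<^sup>2) \<le> (\<Sum>j<m. x j * (p j - 1 / real m))"
proof -
  have "m > 0" using sum_p by (cases m) auto
  have "2 * real m * (2 * (\<Sum>j<m. (p j - 1 / real m)\<^sup>2))
      = 2 * (\<Sum>j<m. \<Sum>k<m. (p j - p k) * (p j - p k))"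
    by (simp add: sum_centered_sq_eq[OF sum_p] flip: sum_mult_centered_eq[OF sum_p])
  also have "\<dots> \<le> (\<Sum>j<m. \<Sum>k<m. (x j - x k) * (p j - p k))"
    unfolding sum_distrib_left by (intro sum_mono) (use pairwise in \<open>simp add: power2_eq_square\<close>)
  also have "\<dots> = 2 * real m * (\<Sum>j<m. x j * (p j - 1 / real m))"
    by (rule sum_mult_centered_eq[OF sum_p, symmetric])
  finally show ?thesis
    using \<open>m > 0\<close> by simp
qed

lemma sum_softmax:
  assumes "0 < m"
  shows "(\<Sum>j<m. softmax m s i j) = 1"
proof -
  have "0 < (\<Sum>l<m. exp (s i l))"
    using assms by (intro sum_pos) auto
  then show ?thesis
    unfolding softmax_def by (simp flip: sum_divide_distrib)
qed

lemma softmax_diff_sq_le: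
  assumes "j < m" "k < m"
  shows "2 * (softmax m s i j - softmax m s i k)\<^sup>2
       \<le> (s i j - s i k) * (softmax m s i j - softmax m s i k)"
proof (cases "j = k")
  case False
  have "exp (s i j) + exp (s i k) = (\<Sum>l\<in>{j, k}. exp (s i l))"
    using False by simp
  also have "\<dots> \<le> (\<Sum>l<m. exp (s i l))"
    using assms by (intro sum_mono2) auto
  finally show ?thesis
    unfolding softmax_def by (rule exp_div_diff_sq_le)
qed simp

lemma fbar_row_ge:
  assumes "0 < m"
  shows "2 * (\<Sum>j<m. (fbar m s i j)\<^sup>2) \<le> (\<Sum>j<m. s i j * fbar m s i j)"
  unfolding fbar_def
  by (rule centered_sum_ge_of_pairwise[OF sum_softmax[OF assms] softmax_diff_sq_le])

theorem lemma1:
  fixes n m :: nat and s :: "nat \<Rightarrow> nat \<Rightarrow> real"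
  assumes "n \<ge> 1" and "m \<ge> 2"
  shows "(\<Sum>i<n. \<Sum>j<m. s i j * fbar m s i j) \<ge> 2 * (\<Sum>i<n. \<Sum>j<m. (fbar m s i j)^2)
       \<and> 2 * (\<Sum>i<n. \<Sum>j<m. (fbar m s i j)^2) \<ge> 0"
proof
  have "0 < m" using assms(2) by simp
  then have "(\<Sum>i<n. 2 * (\<Sum>j<m. (fbar m s i j)^2)) \<le> (\<Sum>i<n. \<Sum>j<m. s i j * fbar m s i j)"
    by (intro sum_mono) (rule fbar_row_ge)
  then show "(\<Sum>i<n. \<Sum>j<m. s i j * fbar m s i j) \<ge> 2 * (\<Sum>i<n. \<Sum>j<m. (fbar m s i j)^2)"
    by (simp add: sum_distrib_left)
  show "2 * (\<Sum>i<n. \<Sum>j<m. (fbar m s i j)^2) \<ge> 0"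
    by (simp add: sum_nonneg)
qed

end
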